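(* Assume the setting below. Let $j\in\mathbb{N}$ and let $w\in F_j$ with $\mathrm{len}(w)>(1,0)$. Then \[|Z_j(w)|\le \mathrm{len}_B(w)\,m_j\,(|Y_j|+|Y_j'|).\]
   Context: Setting: $Q,G$ are groups and $X=(X_n)_{n\in\mathbb{N}}$ is a sequence of finite sets with $|X_n|\ge2$, each with actions of $Q$ and $G$; $Q_n,G_n\subseteq\mathrm{Sym}(X_n)$ are the images and $A_n=\langle Q_n,G_n\rangle$. Assume for all $n$: (A1) $G,Q$ finitely generated; (A2) $Q$ perfect; (A3) $A_n$ is transitive on $X_n$ and generated by the $G_n$-conjugates of $Q_n$. $\mathcal{T}_j$ is the rooted tree of finite words $x_j\cdots x_k$ ($x_i\in X_i$), $\mathrm{Aut}(\mathcal{T}_j)$ its root-fixing automorphisms; sections $h|_u\in\mathrm{Aut}(\mathcal{T}_{j+\ell})$ (for $u$ of level $\ell$) are defined by $h(uv)=h(u)h|_u(v)$. $A_j$ acts by rooted automorphisms $a\cdot x_jx_{j+1}\cdots x_k=(ax_j)x_{j+1}\cdots x_k$ and is identified with its image; $q_j,g_j$ denote images of $q\in Q,g\in G$ in $A_j$. A point $o\in X_i$ is fixed in each $X_i$; $\mathcal{S}=\prod_{i\ge1}(X_i\setminus\{o\})$. For $\alpha\in\mathcal{S}$, $q\in Q$, $\tilde q^\alpha_{[j]}\in\mathrm{Aut}(\mathcal{T}_j)$ acts trivially on the first level with section at $x\in X_j$ equal to $\tilde q^\alpha_{[j+1]}$ if $x=o$, $q_{j+1}$ if $x=\alpha_j$,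 identity otherwise; analogously $\tilde g^\beta_{[j]}$ for $\beta\in\mathcal{S}$, $g\in G$. Let $\Gamma_j^{\alpha,\beta}=\langle A_j,\tilde q^\alpha_{[j]},\tilde g^\beta_{[j]}: q\in Q,g\in G\rangle$. For every $i$, $Y_i,Y_i'\subseteq X_i\setminus\{o\}$ are non-empty disjoint subsets, $\mathcal{Y}=\prod_iY_i$, $\mathcal{Y}'=\prod_iY_i'$, and $m_j$ is the maximal order of an element of $A_j$. For $(\alpha,\beta)\in\mathcal{Y}\times\mathcal{Y}'$ we have $\alpha_i\neq\beta_i$ for all $i$, so the elements $\tilde q^\alpha_{[j]}$ and $\tilde g^\beta_{[j]}$ commute and there is a homomorphism $f_j^{\alpha,\beta}$ from the free product $F_j=A_j*B$, $B=Q\times G$, onto $\Gamma_j^{\alpha,\beta}$, sending $a\in A_j$ to $a$, $q\in Q$ to $\tilde q^\alpha_{[j]}$ and $g\in G$ to $\tilde g^\beta_{[j]}$. Lengths: each $w\in F_j$ has a unique normal form alternating between non-trivial letters from $A_j$ and from $B$; $\mathrm{len}_B(w)$ and $\mathrm{len}_A(w)$ are the numbers of $B$-letters and $A_j$-letters, and $\mathrm{len}(w)=(\mathrm{len}_B(w),\mathrm{len}_A(w))$, with $\mathbb{Z}\times\mathbb{Z}$ ordered lexicographically ($(b,a)>(b',a')$ iff $b>b'$, or $b=b'$ and $a>a'$). For $\gamma\in\Gamma_j^{\alpha,\beta}$, $\mathrm{len}(\gamma)=(\mathrm{len}_B(\gamma),\mathrm{len}_A(\gamma))$ is the minimum of $\mathrm{len}(w)$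 over $w\in F_j$ with $f_j^{\alpha,\beta}(w)=\gamma$ (for elements of $\Gamma_{j+1}^{\alpha,\beta}$ this is taken with respect to $F_{j+1}$ and $f_{j+1}^{\alpha,\beta}$). Stabilized sections: for $h\in\mathrm{Aut}(\mathcal{T}_j)$ and a vertex $u$, $\ell_u(h)$ is the length of the orbit of $u$ under $\langle h\rangle$ and $h\Vert_u=h^{\ell_u(h)}|_u$; for $x\in X_j$ and $\gamma\in\Gamma_j^{\alpha,\beta}$, $\gamma\Vert_x\in\Gamma_{j+1}^{\alpha,\beta}$. The set $Z_j(w)\subseteq Y_j\times Y_j'$: if $\mathrm{len}_B(w)>1$, it consists of the pairs $(s,t)$ for which there exist a vertex $x\in X_j$ and $(\alpha,\beta)\in\mathcal{Y}\times\mathcal{Y}'$ with $\alpha_j=s$, $\beta_j=t$ and $\mathrm{len}_B(f_j^{\alpha,\beta}(w)\Vert_x)=\mathrm{len}_B(w)$; if $\mathrm{len}_B(w)=1$, it consists of the pairs $(s,t)$ for which there exist $x\in X_j$ and $(\alpha,\beta)\in\mathcal{Y}\times\mathcal{Y}'$ with $\alpha_j=s$, $\beta_j=t$ and $\mathrm{len}(f_j^{\alpha,\beta}(w)\Vert_x)>(1,0)$. *)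

theory Defs
  imports "HOL-Algebra.Algebra"
begin

text \<open>Levels are indexed by n \<ge> 1 (the paper's \<nat> starts at 1, since S is a product over i \<ge> 1).  A vertex of the tree T_j is a finite word
x_j x_{j+1} ... x_k, represented as the list [x_j, ..., x_k].\<close>

definition words :: "(nat \<Rightarrow> 'x set) \<Rightarrow> nat \<Rightarrow> 'x list set" where
  "words XS j = {u. \<forall>i<length u. u ! i \<in> XS (j + i)}"

text \<open>Tree automorphisms of T_j are represented as functions on lists acting as the identity
outside the vertex set of T_j.\<close>
definition extw :: "(nat \<Rightarrow> 'x set) \<Rightarrow> nat \<Rightarrow> ('x list \<Rightarrow> 'x list) \<Rightarrow> 'x list \<Rightarrow> 'x list" where
  "extw XS j h = (\<lambda>u. if u \<in> words XS j then h u else u)"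

text \<open>Section h|_u (u a vertex of T_j), an automorphism of T_{j+|u|}: h(uv) = h(u) h|_u(v).\<close>
definition sectn :: "(nat \<Rightarrow> 'x set) \<Rightarrow> nat \<Rightarrow> ('x list \<Rightarrow> 'x list) \<Rightarrow> 'x list \<Rightarrow> 'x list \<Rightarrow> 'x list" where
  "sectn XS j h u = (\<lambda>v. if v \<in> words XS (j + length u) then drop (length u) (h (u @ v)) else v)"

definition liftA :: "(nat \<Rightarrow> 'x set) \<Rightarrow> nat \<Rightarrow> ('x \<Rightarrow> 'x) \<Rightarrow> 'x list \<Rightarrow> 'x list" where
  "liftA XS j a = extw XS j (\<lambda>u. case u of [] \<Rightarrow> [] | x # v \<Rightarrow> a x # v)"

text \<open>The directed element: trivial on the first level, sectn at o_j is the element of the next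
level, sectn at \<alpha>_j is the rooted automorphism act (j+1), identity elsewhere.\<close>
fun tilde_raw :: "(nat \<Rightarrow> 'x) \<Rightarrow> (nat \<Rightarrow> 'x) \<Rightarrow> (nat \<Rightarrow> 'x \<Rightarrow> 'x) \<Rightarrow> nat \<Rightarrow> 'x list \<Rightarrow> 'x list" where
  "tilde_raw ob \<alpha> act j [] = []"
| "tilde_raw ob \<alpha> act j (x # v) =
     x # (if x = ob j then tilde_raw ob \<alpha> act (Suc j) v
          else if x = \<alpha> j then (case v of [] \<Rightarrow> [] | y # v' \<Rightarrow> act (Suc j) y # v')
          else v)"

definition tilde :: "(nat \<Rightarrow> 'x set) \<Rightarrow> (nat \<Rightarrow> 'x) \<Rightarrow> (nat \<Rightarrow> 'x) \<Rightarrow> (nat \<Rightarrow> 'x \<Rightarrow> 'x) \<Rightarrow> nat \<Rightarrow> 'x list \<Rightarrow> 'x list" where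
  "tilde XS ob \<alpha> act j = extw XS j (tilde_raw ob \<alpha> act j)"

definition Agrp :: "(nat \<Rightarrow> 'x set) \<Rightarrow> ('q, 'a) monoid_scheme \<Rightarrow> ('g, 'b) monoid_scheme
    \<Rightarrow> (nat \<Rightarrow> 'q \<Rightarrow> 'x \<Rightarrow> 'x) \<Rightarrow> (nat \<Rightarrow> 'g \<Rightarrow> 'x \<Rightarrow> 'x) \<Rightarrow> nat \<Rightarrow> ('x \<Rightarrow> 'x) set" where
  "Agrp XS Q G aQ aG n = generate (BijGroup (XS n)) (aQ n ` carrier Q \<union> aG n ` carrier G)"

text \<open>Elements of the free product F_j = A_j * B (B = Q \<times> G) are represented by their unique
normal forms: alternating lists of non-trivial letters, Inl a for a \<in> A_j, Inr (q,g) for (q,g) \<in> B.\<close>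
definition Fj :: "(nat \<Rightarrow> 'x set) \<Rightarrow> ('q, 'a) monoid_scheme \<Rightarrow> ('g, 'b) monoid_scheme
    \<Rightarrow> (nat \<Rightarrow> 'q \<Rightarrow> 'x \<Rightarrow> 'x) \<Rightarrow> (nat \<Rightarrow> 'g \<Rightarrow> 'x \<Rightarrow> 'x) \<Rightarrow> nat \<Rightarrow> (('x \<Rightarrow> 'x) + ('q \<times> 'g)) list set" where
  "Fj XS Q G aQ aG j = {w.
     (\<forall>l \<in> set w. case l of
         Inl a \<Rightarrow> a \<in> Agrp XS Q G aQ aG j \<and> a \<noteq> \<one>\<^bsub>BijGroup (XS j)\<^esub>
       | Inr (q, g) \<Rightarrow> q \<in> carrier Q \<and> g \<in> carrier G \<and> (q, g) \<noteq> (\<one>\<^bsub>Q\<^esub>, \<one>\<^bsub>G\<^esub>))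
   \<and> (\<forall>i. Suc i < length w \<longrightarrow> isl (w ! i) \<noteq> isl (w ! Suc i))}"

definition lenB :: "(('x \<Rightarrow> 'x) + ('q \<times> 'g)) list \<Rightarrow> nat" where
  "lenB w = length (filter (\<lambda>l. \<not> isl l) w)"

definition lenA :: "(('x \<Rightarrow> 'x) + ('q \<times> 'g)) list \<Rightarrow> nat" where
  "lenA w = length (filter isl w)"

text \<open>The homomorphism f_j^{\<alpha>,\<beta>} : F_j \<rightarrow> \<Gamma>_j^{\<alpha>,\<beta>} evaluated on normal forms
(group product = composition of maps).\<close>
definition fj :: "(nat \<Rightarrow> 'x set) \<Rightarrow> (nat \<Rightarrow> 'q \<Rightarrow> 'x \<Rightarrow> 'x) \<Rightarrow> (nat \<Rightarrow> 'g \<Rightarrow> 'x \<Rightarrow> 'x) \<Rightarrow> (nat \<Rightarrow> 'x)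
    \<Rightarrow> nat \<Rightarrow> (nat \<Rightarrow> 'x) \<Rightarrow> (nat \<Rightarrow> 'x) \<Rightarrow> (('x \<Rightarrow> 'x) + ('q \<times> 'g)) list \<Rightarrow> 'x list \<Rightarrow> 'x list" where
  "fj XS aQ aG ob j \<alpha> \<beta> w = foldr (\<lambda>l h. (case l of
        Inl a \<Rightarrow> liftA XS j a
      | Inr (q, g) \<Rightarrow> tilde XS ob \<alpha> (\<lambda>n. aQ n q) j \<circ> tilde XS ob \<beta> (\<lambda>n. aG n g) j) \<circ> h) w id"

text \<open>Length of an element of \<Gamma>_j^{\<alpha>,\<beta>}: lexicographic minimum of len over its preimages in F_j.\<close>
definition glenB where
  "glenB XS Q G aQ aG ob j \<alpha> \<beta> \<gamma> =
     (LEAST b. \<exists>w \<in> Fj XS Q G aQ aG j. fj XS aQ aG ob j \<alpha> \<beta> w = \<gamma> \<and> lenB w = b)"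

definition glenA where
  "glenA XS Q G aQ aG ob j \<alpha> \<beta> \<gamma> =
     (LEAST a. \<exists>w \<in> Fj XS Q G aQ aG j. fj XS aQ aG ob j \<alpha> \<beta> w = \<gamma>
        \<and> lenB w = glenB XS Q G aQ aG ob j \<alpha> \<beta> \<gamma> \<and> lenA w = a)"

definition lex_gt :: "nat \<times> nat \<Rightarrow> nat \<times> nat \<Rightarrow> bool" where
  "lex_gt p p' \<longleftrightarrow> fst p > fst p' \<or> (fst p = fst p' \<and> snd p > snd p')"

definition orblen :: "('x list \<Rightarrow> 'x list) \<Rightarrow> 'x list \<Rightarrow> nat" where
  "orblen h u = (LEAST n. 0 < n \<and> (h ^^ n) u = u)"

definition stabsec :: "(nat \<Rightarrow> 'x set) \<Rightarrow> nat \<Rightarrow> ('x list \<Rightarrow> 'x list) \<Rightarrow> 'x list \<Rightarrow> 'x list \<Rightarrow> 'x list" where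
  "stabsec XS j h u = sectn XS j (h ^^ orblen h u) u"

definition Zset where
  "Zset XS Q G aQ aG ob Y Y' j w = {(s, t) \<in> Y j \<times> Y' j. \<exists>x \<in> XS j. \<exists>\<alpha> \<beta>.
     (\<forall>i\<ge>1. \<alpha> i \<in> Y i) \<and> (\<forall>i\<ge>1. \<beta> i \<in> Y' i) \<and> \<alpha> j = s \<and> \<beta> j = t \<and>
     (let \<gamma> = stabsec XS j (fj XS aQ aG ob j \<alpha> \<beta> w) [x] in
      if lenB w > 1 then glenB XS Q G aQ aG ob (Suc j) \<alpha> \<beta> \<gamma> = lenB w
      else lex_gt (glenB XS Q G aQ aG ob (Suc j) \<alpha> \<beta> \<gamma>, glenA XS Q G aQ aG ob (Suc j) \<alpha> \<beta> \<gamma>) (1, 0))}"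

definition mj where
  "mj XS Q G aQ aG j = Max ((\<lambda>a. group.ord (BijGroup (XS j)) a) ` Agrp XS Q G aQ aG j)"

definition fin_gen :: "('a, 'b) monoid_scheme \<Rightarrow> bool" where
  "fin_gen H \<longleftrightarrow> (\<exists>S. finite S \<and> S \<subseteq> carrier H \<and> generate H S = carrier H)"

end

theory Submission
  imports Defs
begin

(* Let \<pi> be the permutation by which w acts on X_j and, for a B-position i of w, let \<sigma>_i be the
   permutation induced by the part of w to the right of i. The stabilized section of f(w) at x is
   the image of the word obtained by concatenating, along the \<pi>-orbit of x, the sections of the
   letters of w: the B-letter at position i contributes a B-letter when \<sigma>_i maps the current orbit
   point to o, and an A-letter when it maps it to \<alpha>_j or \<beta>_j. Since the \<sigma>_i are injective and the
   orbit points distinct, at most len_B(w) B-letters arise, and len_B(w) of them only if the orbit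
   passes through y_0 = \<sigma>_{i_0}^{-1}(o) for a fixed B-position i_0. A word without A-letters has a
   reduced form with at most one B-letter, so the condition defining Z_j(w) forces both this and an
   A-letter. Hence \<alpha>_j or \<beta>_j lies in {\<sigma>_i(\<pi>^n y_0) : i a B-position, n < ord \<pi>}, a set of at
   most len_B(w) m_j points. *)

lemma inj_on_funpow_least_period:
  assumes period: "(f ^^ L) x = x" and least: "\<And>n. 0 < n \<Longrightarrow> n < L \<Longrightarrow> (f ^^ n) x \<noteq> x"
  shows "inj_on (\<lambda>n. (f ^^ n) x) {..<L}"
proof -
  have False if "m < m'" "m' < L" "(f ^^ m) x = (f ^^ m') x" for m m'
  proof -
    have "(f ^^ (L - m' + m)) x = (f ^^ (L - m')) ((f ^^ m') x)"
      using that(3) by (simp only: funpow_add comp_apply)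
    also have "\<dots> = x"
      using that(2) period by (simp flip: funpow_add comp_apply[of "f ^^ _" "f ^^ _"])
    finally have "(f ^^ (L - m' + m)) x = x" .
    moreover have "(f ^^ (L - m' + m)) x \<noteq> x"
      by (rule least) (use that in auto)
    ultimately show False
      by contradiction
  qed
  then show ?thesis
    by (intro inj_onI) (metis lessThan_iff linorder_neqE_nat)
qed

lemma funpow_in_period_orbit:
  assumes "0 < d" and period: "(f ^^ d) x = x"
  shows "(f ^^ m) x \<in> (\<lambda>n. (f ^^ n) ((f ^^ k) x)) ` {..<d}"
proof -
  let ?y = "(f ^^ k) x"
  have "(f ^^ (d * k)) x = x"
    using funpow_mod_eq[OF period, of "d * k"] by simp
  moreover have "m + (d - 1) * k + k = m + d * k"
    using \<open>0 < d\<close> by (cases d) simp_all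
  ultimately have "(f ^^ m) x = (f ^^ (m + (d - 1) * k)) ?y"
    by (metis comp_apply funpow_add)
  also have "(f ^^ d) ?y = ?y"
    using period by (metis comp_apply funpow_add add.commute)
  then have "(f ^^ (m + (d - 1) * k)) ?y = (f ^^ ((m + (d - 1) * k) mod d)) ?y"
    by (rule funpow_mod_eq [symmetric])
  finally show ?thesis
    using \<open>0 < d\<close> by auto
qed

lemma BijGroup_mult_apply:
  "a \<in> Bij S \<Longrightarrow> b \<in> Bij S \<Longrightarrow> y \<in> S \<Longrightarrow> (a \<otimes>\<^bsub>BijGroup S\<^esub> b) y = a (b y)"
  by (simp add: BijGroup_def compose_def)

lemma BijGroup_one_apply: "y \<in> S \<Longrightarrow> \<one>\<^bsub>BijGroup S\<^esub> y = y"
  by (simp add: BijGroup_def)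

lemma Bij_mem: "a \<in> Bij S \<Longrightarrow> y \<in> S \<Longrightarrow> a y \<in> S"
  by (auto simp: Bij_def bij_betw_def)

lemma BijGroup_pow_apply:
  assumes p: "p \<in> Bij S" and y: "y \<in> S"
  shows "(p [^]\<^bsub>BijGroup S\<^esub> (n::nat)) y = (p ^^ n) y"
  using y
proof (induction n arbitrary: y)
  case 0
  then show ?case by (simp add: BijGroup_one_apply)
next
  case (Suc n)
  interpret group "BijGroup S" by (rule group_BijGroup)
  have "p \<in> carrier (BijGroup S)"
    using p by (simp add: BijGroup_def)
  then have "p [^]\<^bsub>BijGroup S\<^esub> n \<in> Bij S"
    using nat_pow_closed by (simp add: BijGroup_def)
  then have "(p [^]\<^bsub>BijGroup S\<^esub> Suc n) y = (p [^]\<^bsub>BijGroup S\<^esub> n) (p y)"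
    unfolding nat_pow_Suc using p Suc.prems by (rule BijGroup_mult_apply)
  also have "\<dots> = (p ^^ n) (p y)"
    using p Suc by (simp add: Bij_mem)
  finally show ?case
    by (simp only: funpow_Suc_right comp_apply)
qed

lemma finite_BijGroup: "finite S \<Longrightarrow> finite (carrier (BijGroup S))"
  by (rule finite_subset[of _ "S \<rightarrow>\<^sub>E S"])
    (auto simp: BijGroup_def Bij_def bij_betw_def extensional_def finite_PiE)

section \<open>Automorphisms of the tree\<close>

lemma words_Nil [simp]: "[] \<in> words XS k"
  by (simp add: words_def)

lemma words_Cons [simp]: "x # v \<in> words XS k \<longleftrightarrow> x \<in> XS k \<and> v \<in> words XS (Suc k)"
  by (simp add: words_def All_less_Suc2)

lemma tilde_raw_words:
  assumes "\<forall>n>k. \<forall>y\<in>XS n. act n y \<in> XS n" and "u \<in> words XS k"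
  shows "tilde_raw ob \<alpha> act k u \<in> words XS k"
  using assms by (induction u arbitrary: k) (auto split: list.split)

lemma tilde_raw_comp:
  assumes "\<forall>n>k. \<forall>y\<in>XS n. act2 n y \<in> XS n"
    and "\<forall>n>k. \<forall>y\<in>XS n. act12 n y = act1 n (act2 n y)"
    and "u \<in> words XS k"
  shows "tilde_raw ob \<alpha> act1 k (tilde_raw ob \<alpha> act2 k u) = tilde_raw ob \<alpha> act12 k u"
  using assms by (induction u arbitrary: k) (auto split: list.split)

lemma tilde_raw_id:
  assumes "\<forall>n>k. \<forall>y\<in>XS n. act n y = y" and "u \<in> words XS k"
  shows "tilde_raw ob \<alpha> act k u = u"
  using assms by (induction u arbitrary: k) (auto split: list.split)

lemma tilde_raw_commute:
  assumes "\<forall>n\<ge>k. \<alpha> n \<noteq> \<beta> n" and "u \<in> words XS k"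
  shows "tilde_raw ob \<alpha> act1 k (tilde_raw ob \<beta> act2 k u) = tilde_raw ob \<beta> act2 k (tilde_raw ob \<alpha> act1 k u)"
  using assms by (induction u arbitrary: k) (auto split: list.split)

lemma tilde_comp:
  assumes "\<forall>n>k. \<forall>y\<in>XS n. act2 n y \<in> XS n"
    and "\<forall>n>k. \<forall>y\<in>XS n. act12 n y = act1 n (act2 n y)"
  shows "tilde XS ob \<alpha> act1 k \<circ> tilde XS ob \<alpha> act2 k = tilde XS ob \<alpha> act12 k"
  using tilde_raw_words[OF assms(1)] tilde_raw_comp[OF assms]
  by (auto simp: tilde_def extw_def)

lemma tilde_id:
  assumes "\<forall>n>k. \<forall>y\<in>XS n. act n y = y"
  shows "tilde XS ob \<alpha> act k = id"
  using tilde_raw_id[OF assms] by (auto simp: tilde_def extw_def)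

lemma tilde_commute:
  assumes "\<forall>n\<ge>k. \<alpha> n \<noteq> \<beta> n"
    and "\<forall>n>k. \<forall>y\<in>XS n. act1 n y \<in> XS n" and "\<forall>n>k. \<forall>y\<in>XS n. act2 n y \<in> XS n"
  shows "tilde XS ob \<alpha> act1 k \<circ> tilde XS ob \<beta> act2 k = tilde XS ob \<beta> act2 k \<circ> tilde XS ob \<alpha> act1 k"
  using tilde_raw_words[OF assms(2)] tilde_raw_words[OF assms(3)] tilde_raw_commute[OF assms(1)]
  by (auto simp: tilde_def extw_def)

lemma liftA_mult:
  assumes a: "a \<in> Bij (XS k)" and b: "b \<in> Bij (XS k)"
  shows "liftA XS k a \<circ> liftA XS k b = liftA XS k (a \<otimes>\<^bsub>BijGroup (XS k)\<^esub> b)"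
proof
  fix u
  show "(liftA XS k a \<circ> liftA XS k b) u = liftA XS k (a \<otimes>\<^bsub>BijGroup (XS k)\<^esub> b) u"
  proof (cases "u \<in> words XS k")
    case True
    then show ?thesis
      using a b Bij_mem[OF b]
      by (cases u) (simp_all add: liftA_def extw_def BijGroup_mult_apply)
  next
    case False
    then show ?thesis
      by (simp add: liftA_def extw_def)
  qed
qed

definition fj_letter :: "(nat \<Rightarrow> 'x set) \<Rightarrow> (nat \<Rightarrow> 'q \<Rightarrow> 'x \<Rightarrow> 'x) \<Rightarrow> (nat \<Rightarrow> 'g \<Rightarrow> 'x \<Rightarrow> 'x)
    \<Rightarrow> (nat \<Rightarrow> 'x) \<Rightarrow> nat \<Rightarrow> (nat \<Rightarrow> 'x) \<Rightarrow> (nat \<Rightarrow> 'x) \<Rightarrow> ('x \<Rightarrow> 'x) + 'q \<times> 'g \<Rightarrow> 'x list \<Rightarrow> 'x list"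
  where "fj_letter XS aQ aG ob k \<alpha> \<beta> l = (case l of
      Inl a \<Rightarrow> liftA XS k a
    | Inr (q, g) \<Rightarrow> tilde XS ob \<alpha> (\<lambda>n. aQ n q) k \<circ> tilde XS ob \<beta> (\<lambda>n. aG n g) k)"

lemma fj_Nil [simp]: "fj XS aQ aG ob k \<alpha> \<beta> [] = id"
  by (simp add: fj_def)

lemma fj_Cons [simp]:
  "fj XS aQ aG ob k \<alpha> \<beta> (l # w) = fj_letter XS aQ aG ob k \<alpha> \<beta> l \<circ> fj XS aQ aG ob k \<alpha> \<beta> w"
  by (simp add: fj_def fj_letter_def)

lemma fj_append:
  "fj XS aQ aG ob k \<alpha> \<beta> (w @ w') = fj XS aQ aG ob k \<alpha> \<beta> w \<circ> fj XS aQ aG ob k \<alpha> \<beta> w'"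
  by (induction w) (simp_all add: o_assoc)

lemma fj_letter_outside_words: "u \<notin> words XS k \<Longrightarrow> fj_letter XS aQ aG ob k \<alpha> \<beta> l u = u"
  by (auto simp: fj_letter_def liftA_def tilde_def extw_def split: sum.split prod.split)

lemma fj_outside_words: "u \<notin> words XS k \<Longrightarrow> fj XS aQ aG ob k \<alpha> \<beta> w u = u"
  by (induction w) (simp_all add: fj_letter_outside_words)

lemma fj_letter_root: "fj_letter XS aQ aG ob k \<alpha> \<beta> l [] = []"
  by (auto simp: fj_letter_def liftA_def tilde_def extw_def split: sum.split prod.split)

lemma fj_root: "fj XS aQ aG ob k \<alpha> \<beta> w [] = []"
  by (induction w) (simp_all add: fj_letter_root)

lemma successively_iff_nth:
  "successively P xs \<longleftrightarrow> (\<forall>i. Suc i < length xs \<longrightarrow> P (xs ! i) (xs ! Suc i))"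
proof (induction xs rule: induct_list012)
  case (3 x y zs)
  then show ?case
    by (auto simp: less_Suc_eq_0_disj)
qed simp_all

type_synonym ('x, 'q, 'g) word = "(('x \<Rightarrow> 'x) + 'q \<times> 'g) list"

definition letter_root :: "('x \<Rightarrow> 'x) + 'q \<times> 'g \<Rightarrow> 'x \<Rightarrow> 'x" where
  "letter_root l x = (case l of Inl a \<Rightarrow> a x | Inr _ \<Rightarrow> x)"

definition root_perm :: "('x, 'q, 'g) word \<Rightarrow> 'x \<Rightarrow> 'x" where
  "root_perm w x = foldr letter_root w x"

lemma root_perm_Nil [simp]: "root_perm [] x = x"
  by (simp add: root_perm_def)

lemma root_perm_Cons [simp]: "root_perm (l # w) x = letter_root l (root_perm w x)"
  by (simp add: root_perm_def)

definition B_positions :: "('a + 'b) list \<Rightarrow> nat set" where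
  "B_positions w = {i. i < length w \<and> \<not> isl (w ! i)}"

lemma finite_B_positions [simp]: "finite (B_positions w)"
  by (simp add: B_positions_def)

lemma card_B_positions: "card (B_positions w) = lenB w"
  by (simp add: B_positions_def lenB_def length_filter_conv_card)

lemma lenB_Nil [simp]: "lenB [] = 0"
  by (simp add: lenB_def)

lemma lenA_Nil [simp]: "lenA [] = 0"
  by (simp add: lenA_def)

lemma lenB_Cons [simp]: "lenB (l # w) = (if isl l then 0 else 1) + lenB w"
  by (simp add: lenB_def)

lemma lenA_Cons [simp]: "lenA (l # w) = (if isl l then 1 else 0) + lenA w"
  by (simp add: lenA_def)

lemma lenB_append [simp]: "lenB (u @ w) = lenB u + lenB w"
  by (simp add: lenB_def)

lemma lenA_append [simp]: "lenA (u @ w) = lenA u + lenA w"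
  by (simp add: lenA_def)

locale level_actions =
  fixes XS :: "nat \<Rightarrow> 'x set" and Q :: "('q, 'a) monoid_scheme" and G :: "('g, 'b) monoid_scheme"
    and aQ :: "nat \<Rightarrow> 'q \<Rightarrow> 'x \<Rightarrow> 'x" and aG :: "nat \<Rightarrow> 'g \<Rightarrow> 'x \<Rightarrow> 'x"
    and ob :: "nat \<Rightarrow> 'x"
  assumes finite_level: "\<And>n. n \<ge> 1 \<Longrightarrow> finite (XS n)"
    and action_Q: "\<And>n. n \<ge> 1 \<Longrightarrow> group_action Q (XS n) (aQ n)"
    and action_G: "\<And>n. n \<ge> 1 \<Longrightarrow> group_action G (XS n) (aG n)"
    and ob_in_level: "\<And>n. n \<ge> 1 \<Longrightarrow> ob n \<in> XS n"
begin

abbreviation "BG n \<equiv> BijGroup (XS n)"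
abbreviation "AG n \<equiv> Agrp XS Q G aQ aG n"
abbreviation "\<phi> \<equiv> fj XS aQ aG ob"
abbreviation "\<phi>\<^sub>l \<equiv> fj_letter XS aQ aG ob"
abbreviation "F k \<equiv> Fj XS Q G aQ aG k"

lemma group_Q: "group Q"
  using group_action.group_hom[OF action_Q[of 1]] by (simp add: group_hom_def)

lemma group_G: "group G"
  using group_action.group_hom[OF action_G[of 1]] by (simp add: group_hom_def)

lemma aQ_in_level: "n \<ge> 1 \<Longrightarrow> q \<in> carrier Q \<Longrightarrow> y \<in> XS n \<Longrightarrow> aQ n q y \<in> XS n"
  using group_action.element_image[OF action_Q] by blast

lemma aG_in_level: "n \<ge> 1 \<Longrightarrow> g \<in> carrier G \<Longrightarrow> y \<in> XS n \<Longrightarrow> aG n g y \<in> XS n"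
  using group_action.element_image[OF action_G] by blast

lemma aQ_mult: "n \<ge> 1 \<Longrightarrow> q \<in> carrier Q \<Longrightarrow> q' \<in> carrier Q \<Longrightarrow> y \<in> XS n \<Longrightarrow>
    aQ n (q \<otimes>\<^bsub>Q\<^esub> q') y = aQ n q (aQ n q' y)"
  using group_action.composition_rule[OF action_Q] by blast

lemma aG_mult: "n \<ge> 1 \<Longrightarrow> g \<in> carrier G \<Longrightarrow> g' \<in> carrier G \<Longrightarrow> y \<in> XS n \<Longrightarrow>
    aG n (g \<otimes>\<^bsub>G\<^esub> g') y = aG n g (aG n g' y)"
  using group_action.composition_rule[OF action_G] by blast

lemma aQ_one: "n \<ge> 1 \<Longrightarrow> y \<in> XS n \<Longrightarrow> aQ n \<one>\<^bsub>Q\<^esub> y = y"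
  using group_action.id_eq_one[OF action_Q, of n] by (metis restrict_apply')

lemma aG_one: "n \<ge> 1 \<Longrightarrow> y \<in> XS n \<Longrightarrow> aG n \<one>\<^bsub>G\<^esub> y = y"
  using group_action.id_eq_one[OF action_G, of n] by (metis restrict_apply')

lemma aQ_in_Agrp: "n \<ge> 1 \<Longrightarrow> q \<in> carrier Q \<Longrightarrow> aQ n q \<in> AG n"
  unfolding Agrp_def by (auto intro: generate.incl)

lemma aG_in_Agrp: "n \<ge> 1 \<Longrightarrow> g \<in> carrier G \<Longrightarrow> aG n g \<in> AG n"
  unfolding Agrp_def by (auto intro: generate.incl)

lemma aQ_Bij: "n \<ge> 1 \<Longrightarrow> q \<in> carrier Q \<Longrightarrow> aQ n q \<in> carrier (BG n)"
  using group_action.bij_prop0[OF action_Q] by (simp add: BijGroup_def)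

lemma aG_Bij: "n \<ge> 1 \<Longrightarrow> g \<in> carrier G \<Longrightarrow> aG n g \<in> carrier (BG n)"
  using group_action.bij_prop0[OF action_G] by (simp add: BijGroup_def)

lemma subgroup_Agrp: "n \<ge> 1 \<Longrightarrow> subgroup (AG n) (BG n)"
  unfolding Agrp_def
  by (rule group.generate_is_subgroup[OF group_BijGroup]) (auto simp: aQ_Bij aG_Bij)

lemma Agrp_Bij: "n \<ge> 1 \<Longrightarrow> a \<in> AG n \<Longrightarrow> a \<in> Bij (XS n)"
  using subgroup.subset[OF subgroup_Agrp] by (auto simp: BijGroup_def)

definition is_letter :: "nat \<Rightarrow> ('x \<Rightarrow> 'x) + 'q \<times> 'g \<Rightarrow> bool" where
  "is_letter k l \<longleftrightarrow>
     (case l of Inl a \<Rightarrow> a \<in> AG k | Inr (q, g) \<Rightarrow> q \<in> carrier Q \<and> g \<in> carrier G)"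

(* The only consequences of (\<alpha>, \<beta>) \<in> Y \<times> Y' that are used. *)
definition admissible :: "(nat \<Rightarrow> 'x) \<Rightarrow> (nat \<Rightarrow> 'x) \<Rightarrow> bool" where
  "admissible \<alpha> \<beta> \<longleftrightarrow> (\<forall>n\<ge>1. \<alpha> n \<noteq> \<beta> n \<and> \<alpha> n \<noteq> ob n \<and> \<beta> n \<noteq> ob n)"

lemma letter_root_in_level: "k \<ge> 1 \<Longrightarrow> is_letter k l \<Longrightarrow> x \<in> XS k \<Longrightarrow> letter_root l x \<in> XS k"
  by (auto simp: letter_root_def is_letter_def Bij_mem Agrp_Bij split: sum.split)

lemma root_perm_in_level:
  "k \<ge> 1 \<Longrightarrow> \<forall>l\<in>set w. is_letter k l \<Longrightarrow> x \<in> XS k \<Longrightarrow> root_perm w x \<in> XS k"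
  by (induction w) (auto simp: letter_root_in_level)

lemma funpow_root_perm_in_level:
  "k \<ge> 1 \<Longrightarrow> \<forall>l\<in>set w. is_letter k l \<Longrightarrow> x \<in> XS k \<Longrightarrow> (root_perm w ^^ n) x \<in> XS k"
  by (induction n) (auto intro: root_perm_in_level)

lemma fj_letter_words:
  assumes k: "k \<ge> 1" and l: "is_letter k l" and u: "u \<in> words XS k"
  shows "\<phi>\<^sub>l k \<alpha> \<beta> l u \<in> words XS k"
proof (cases l)
  case (Inl a)
  then have "a \<in> Bij (XS k)"
    using k l Agrp_Bij by (simp add: is_letter_def)
  then show ?thesis
    using Inl u by (cases u) (auto simp: fj_letter_def liftA_def extw_def Bij_mem)
next
  case (Inr p)
  then obtain q g where qg: "l = Inr (q, g)" "q \<in> carrier Q" "g \<in> carrier G"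
    using l by (cases p) (auto simp: is_letter_def)
  have "\<forall>n>k. \<forall>y\<in>XS n. aQ n q y \<in> XS n" "\<forall>n>k. \<forall>y\<in>XS n. aG n g y \<in> XS n"
    using qg k aQ_in_level aG_in_level by auto
  then show ?thesis
    using qg u tilde_raw_words by (auto simp: fj_letter_def tilde_def extw_def)
qed

lemma fj_words:
  "k \<ge> 1 \<Longrightarrow> \<forall>l\<in>set w. is_letter k l \<Longrightarrow> u \<in> words XS k \<Longrightarrow> \<phi> k \<alpha> \<beta> w u \<in> words XS k"
  by (induction w) (auto simp: fj_letter_words)

section \<open>Sections of images of words\<close>

(* The section at x of \<phi>\<^sub>l k \<alpha> \<beta> (Inr (q, g)), i.e. of the product of the directed elements
   q\<^sup>\<alpha> and g\<^sup>\<beta>, as a word one level down; since \<alpha> k, \<beta> k and ob k are distinct, at most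
   one of the two factors contributes. *)
definition letter_section ::
    "nat \<Rightarrow> (nat \<Rightarrow> 'x) \<Rightarrow> (nat \<Rightarrow> 'x) \<Rightarrow> ('x \<Rightarrow> 'x) + 'q \<times> 'g \<Rightarrow> 'x \<Rightarrow> ('x, 'q, 'g) word" where
  "letter_section k \<alpha> \<beta> l x = (case l of
      Inl a \<Rightarrow> []
    | Inr (q, g) \<Rightarrow>
        if x = ob k then [Inr (q, g)]
        else if x = \<alpha> k then [Inl (aQ (Suc k) q)]
        else if x = \<beta> k then [Inl (aG (Suc k) g)]
        else [])"

lemma letter_section_letters:
  "k \<ge> 1 \<Longrightarrow> is_letter k l \<Longrightarrow> l' \<in> set (letter_section k \<alpha> \<beta> l x) \<Longrightarrow> is_letter (Suc k) l'"
  by (auto simp: letter_section_def is_letter_def aQ_in_Agrp aG_in_Agrp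
      split: sum.split_asm prod.split_asm if_splits)

lemma fj_letter_Cons:
  assumes k: "k \<ge> 1" and l: "is_letter k l" and adm: "admissible \<alpha> \<beta>"
    and x: "x \<in> XS k" and v: "v \<in> words XS (Suc k)"
  shows "\<phi>\<^sub>l k \<alpha> \<beta> l (x # v) = letter_root l x # \<phi> (Suc k) \<alpha> \<beta> (letter_section k \<alpha> \<beta> l x) v"
proof (cases l)
  case (Inl a)
  then show ?thesis
    using x v by (simp add: fj_letter_def liftA_def extw_def letter_root_def letter_section_def)
next
  case (Inr p)
  then obtain q g where qg: "l = Inr (q, g)" "q \<in> carrier Q" "g \<in> carrier G"
    using l by (cases p) (auto simp: is_letter_def)
  have hg: "\<forall>n>k. \<forall>y\<in>XS n. aG n g y \<in> XS n"
    using qg k aG_in_level by auto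
  have ne: "\<alpha> k \<noteq> \<beta> k" "\<alpha> k \<noteq> ob k" "\<beta> k \<noteq> ob k"
    using adm k by (auto simp: admissible_def)
  have "tilde_raw ob \<beta> (\<lambda>n. aG n g) k (x # v) \<in> words XS k"
    by (rule tilde_raw_words[OF hg]) (simp add: x v)
  moreover have "tilde_raw ob \<beta> (\<lambda>n. aG n g) (Suc k) v \<in> words XS (Suc k)"
    by (rule tilde_raw_words) (use hg v in auto)
  moreover have "(case v of [] \<Rightarrow> [] | y # v' \<Rightarrow> aG (Suc k) g y # v') \<in> words XS (Suc k)"
    using v hg by (auto split: list.split)
  ultimately show ?thesis
    using qg x v ne
    by (auto simp: fj_letter_def tilde_def extw_def letter_root_def letter_section_def liftA_def
        split: list.split)
qed

fun word_section ::
    "nat \<Rightarrow> (nat \<Rightarrow> 'x) \<Rightarrow> (nat \<Rightarrow> 'x) \<Rightarrow> ('x, 'q, 'g) word \<Rightarrow> 'x \<Rightarrow> ('x, 'q, 'g) word" where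
  "word_section k \<alpha> \<beta> [] x = []"
| "word_section k \<alpha> \<beta> (l # w) x = letter_section k \<alpha> \<beta> l (root_perm w x) @ word_section k \<alpha> \<beta> w x"

lemma word_section_letters:
  "k \<ge> 1 \<Longrightarrow> \<forall>l\<in>set w. is_letter k l \<Longrightarrow> \<forall>l'\<in>set (word_section k \<alpha> \<beta> w x). is_letter (Suc k) l'"
  by (induction w) (auto intro: letter_section_letters)

lemma fj_Cons_vertex:
  assumes k: "k \<ge> 1" and w: "\<forall>l\<in>set w. is_letter k l" and adm: "admissible \<alpha> \<beta>"
    and x: "x \<in> XS k" and v: "v \<in> words XS (Suc k)"
  shows "\<phi> k \<alpha> \<beta> w (x # v) = root_perm w x # \<phi> (Suc k) \<alpha> \<beta> (word_section k \<alpha> \<beta> w x) v"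
  using w
proof (induction w)
  case (Cons l w)
  have "\<phi> (Suc k) \<alpha> \<beta> (word_section k \<alpha> \<beta> w x) v \<in> words XS (Suc k)"
    using Cons.prems k v word_section_letters[OF k] by (intro fj_words) auto
  then show ?case
    using Cons k adm x by (simp add: fj_letter_Cons root_perm_in_level fj_append)
qed simp

fun power_section ::
    "nat \<Rightarrow> (nat \<Rightarrow> 'x) \<Rightarrow> (nat \<Rightarrow> 'x) \<Rightarrow> ('x, 'q, 'g) word \<Rightarrow> nat \<Rightarrow> 'x \<Rightarrow> ('x, 'q, 'g) word" where
  "power_section k \<alpha> \<beta> w 0 x = []"
| "power_section k \<alpha> \<beta> w (Suc n) x =
     word_section k \<alpha> \<beta> w ((root_perm w ^^ n) x) @ power_section k \<alpha> \<beta> w n x"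

lemma power_section_letters:
  "k \<ge> 1 \<Longrightarrow> \<forall>l\<in>set w. is_letter k l \<Longrightarrow> \<forall>l'\<in>set (power_section k \<alpha> \<beta> w n x). is_letter (Suc k) l'"
  by (induction n) (use word_section_letters in auto)

lemma funpow_fj_Cons_vertex:
  assumes k: "k \<ge> 1" and w: "\<forall>l\<in>set w. is_letter k l" and adm: "admissible \<alpha> \<beta>"
    and x: "x \<in> XS k" and v: "v \<in> words XS (Suc k)"
  shows "(\<phi> k \<alpha> \<beta> w ^^ n) (x # v) =
    (root_perm w ^^ n) x # \<phi> (Suc k) \<alpha> \<beta> (power_section k \<alpha> \<beta> w n x) v"
proof (induction n)
  case (Suc n)
  have "\<phi> (Suc k) \<alpha> \<beta> (power_section k \<alpha> \<beta> w n x) v \<in> words XS (Suc k)"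
    using k w v power_section_letters[OF k w] by (intro fj_words) auto
  then show ?case
    using Suc k w adm x
    by (simp add: fj_Cons_vertex funpow_root_perm_in_level fj_append)
qed simp

definition root_period :: "('x, 'q, 'g) word \<Rightarrow> 'x \<Rightarrow> nat" where
  "root_period w x = (LEAST n. 0 < n \<and> (root_perm w ^^ n) x = x)"

lemma stabsec_fj:
  assumes "k \<ge> 1" and "\<forall>l\<in>set w. is_letter k l" and "admissible \<alpha> \<beta>" and "x \<in> XS k"
  shows "stabsec XS k (\<phi> k \<alpha> \<beta> w) [x] = \<phi> (Suc k) \<alpha> \<beta> (power_section k \<alpha> \<beta> w (root_period w x) x)"
proof -
  have "(\<phi> k \<alpha> \<beta> w ^^ n) [x] = [(root_perm w ^^ n) x]" for n
    using funpow_fj_Cons_vertex[OF assms words_Nil] by (simp add: fj_root)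
  then have "orblen (\<phi> k \<alpha> \<beta> w) [x] = root_period w x"
    by (simp add: orblen_def root_period_def)
  then show ?thesis
    using funpow_fj_Cons_vertex[OF assms]
    by (auto simp: stabsec_def sectn_def fj_outside_words)
qed

section \<open>Reduced words\<close>

definition nontrivial_letter :: "nat \<Rightarrow> ('x \<Rightarrow> 'x) + 'q \<times> 'g \<Rightarrow> bool" where
  "nontrivial_letter k l \<longleftrightarrow> (case l of
      Inl a \<Rightarrow> a \<in> AG k \<and> a \<noteq> \<one>\<^bsub>BG k\<^esub>
    | Inr (q, g) \<Rightarrow> q \<in> carrier Q \<and> g \<in> carrier G \<and> (q, g) \<noteq> (\<one>\<^bsub>Q\<^esub>, \<one>\<^bsub>G\<^esub>))"

lemma Fj_iff_successively:
  "w \<in> F k \<longleftrightarrow> (\<forall>l\<in>set w. nontrivial_letter k l) \<and> successively (\<lambda>l l'. isl l \<noteq> isl l') w"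
  by (simp add: Fj_def nontrivial_letter_def successively_iff_nth)

lemma Fj_Nil: "[] \<in> F k"
  by (simp add: Fj_def)

lemma Fj_Cons:
  "l # w \<in> F k \<longleftrightarrow> nontrivial_letter k l \<and> w \<in> F k \<and> (w \<noteq> [] \<longrightarrow> isl l \<noteq> isl (hd w))"
  using Fj_iff_successively[of "l # w" k] Fj_iff_successively[of w k]
  by (auto simp: successively_Cons)

lemma is_letter_if_nontrivial: "nontrivial_letter k l \<Longrightarrow> is_letter k l"
  by (auto simp: nontrivial_letter_def is_letter_def split: sum.splits)

lemma fj_letter_trivial:
  assumes k: "k \<ge> 1" and l: "is_letter k l" and "\<not> nontrivial_letter k l"
  shows "\<phi>\<^sub>l k \<alpha> \<beta> l = id"
proof (cases l)
  case (Inl a)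
  then have "a = \<one>\<^bsub>BG k\<^esub>"
    using l assms(3) by (auto simp: is_letter_def nontrivial_letter_def)
  then show ?thesis
    using Inl by (auto simp: fj_letter_def liftA_def extw_def BijGroup_one_apply split: list.split)
next
  case (Inr p)
  then obtain q g where qg: "l = Inr (q, g)" "q = \<one>\<^bsub>Q\<^esub>" "g = \<one>\<^bsub>G\<^esub>"
    using l assms(3) by (cases p) (auto simp: is_letter_def nontrivial_letter_def)
  have "tilde XS ob \<alpha> (\<lambda>n. aQ n q) k = id" "tilde XS ob \<beta> (\<lambda>n. aG n g) k = id"
    using k qg aQ_one aG_one by (auto intro!: tilde_id)
  then show ?thesis
    using qg by (simp add: fj_letter_def)
qed

definition letter_mult ::
    "nat \<Rightarrow> ('x \<Rightarrow> 'x) + 'q \<times> 'g \<Rightarrow> ('x \<Rightarrow> 'x) + 'q \<times> 'g \<Rightarrow> ('x \<Rightarrow> 'x) + 'q \<times> 'g" where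
  "letter_mult k l l' = (case (l, l') of
      (Inl a, Inl b) \<Rightarrow> Inl (a \<otimes>\<^bsub>BG k\<^esub> b)
    | (Inr (q, g), Inr (q', g')) \<Rightarrow> Inr (q \<otimes>\<^bsub>Q\<^esub> q', g \<otimes>\<^bsub>G\<^esub> g')
    | _ \<Rightarrow> l)"

lemma letter_mult_is_letter:
  "k \<ge> 1 \<Longrightarrow> is_letter k l \<Longrightarrow> is_letter k l' \<Longrightarrow> isl l = isl l' \<Longrightarrow>
    is_letter k (letter_mult k l l') \<and> isl (letter_mult k l l') = isl l"
  using subgroup.m_closed[OF subgroup_Agrp] group.subgroup_self[OF group_Q]
    group.subgroup_self[OF group_G]
  by (auto simp: letter_mult_def is_letter_def split: sum.splits prod.splits intro: subgroup.m_closed)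

lemma fj_letter_mult:
  assumes k: "k \<ge> 1" and l: "is_letter k l" and l': "is_letter k l'" and "isl l = isl l'"
    and adm: "admissible \<alpha> \<beta>"
  shows "\<phi>\<^sub>l k \<alpha> \<beta> l \<circ> \<phi>\<^sub>l k \<alpha> \<beta> l' = \<phi>\<^sub>l k \<alpha> \<beta> (letter_mult k l l')"
proof (cases l)
  case (Inl a)
  then obtain b where b: "l' = Inl b"
    using \<open>isl l = isl l'\<close> by (cases l') simp_all
  have "a \<in> Bij (XS k)" "b \<in> Bij (XS k)"
    using Inl b l l' Agrp_Bij k by (auto simp: is_letter_def)
  then show ?thesis
    using Inl b by (simp add: fj_letter_def letter_mult_def liftA_mult)
next
  case (Inr p)
  then obtain q g q' g' where qg: "l = Inr (q, g)" "l' = Inr (q', g')"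
    using \<open>isl l = isl l'\<close> by (cases p; cases l') (simp_all, metis surj_pair)
  then have c: "q \<in> carrier Q" "g \<in> carrier G" "q' \<in> carrier Q" "g' \<in> carrier G"
    using l l' by (auto simp: is_letter_def)
  let ?tQ = "\<lambda>q. tilde XS ob \<alpha> (\<lambda>n. aQ n q) k" and ?tG = "\<lambda>g. tilde XS ob \<beta> (\<lambda>n. aG n g) k"
  have "\<forall>n\<ge>k. \<alpha> n \<noteq> \<beta> n"
    using adm k by (simp add: admissible_def)
  moreover have "\<forall>n>k. \<forall>y\<in>XS n. aQ n q' y \<in> XS n" "\<forall>n>k. \<forall>y\<in>XS n. aG n g y \<in> XS n"
    using k c(2,3) aQ_in_level aG_in_level by simp_all
  ultimately have comm: "?tQ q' \<circ> ?tG g = ?tG g \<circ> ?tQ q'"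
    by (rule tilde_commute)
  have "?tQ q \<circ> ?tQ q' = ?tQ (q \<otimes>\<^bsub>Q\<^esub> q')"
    using k c(1,3) aQ_in_level aQ_mult by (intro tilde_comp) simp_all
  moreover have "?tG g \<circ> ?tG g' = ?tG (g \<otimes>\<^bsub>G\<^esub> g')"
    using k c(2,4) aG_in_level aG_mult by (intro tilde_comp) simp_all
  moreover have "(?tQ q \<circ> ?tG g) \<circ> (?tQ q' \<circ> ?tG g') = (?tQ q \<circ> ?tQ q') \<circ> (?tG g \<circ> ?tG g')"
    using fun_cong[OF comm] by (simp add: fun_eq_iff)
  ultimately show ?thesis
    using qg by (simp add: fj_letter_def letter_mult_def)
qed

lemma reduced_word_Cons:
  assumes k: "k \<ge> 1" and adm: "admissible \<alpha> \<beta>" and l: "is_letter k l" and w: "w \<in> F k"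
  obtains w' where "w' \<in> F k" "\<phi> k \<alpha> \<beta> w' = \<phi> k \<alpha> \<beta> (l # w)"
    and "lenB w' \<le> lenB (l # w)" and "lenA w' \<le> lenA (l # w)"
proof (cases "nontrivial_letter k l")
  case False
  then show ?thesis
    using that[of w] w fj_letter_trivial[OF k l] by simp
next
  case True
  show ?thesis
  proof (cases "w \<noteq> [] \<longrightarrow> isl l \<noteq> isl (hd w)")
    case True
    then show ?thesis
      using that[of "l # w"] \<open>nontrivial_letter k l\<close> w by (simp add: Fj_Cons)
  next
    case False
    then obtain l' w'' where ww: "w = l' # w''" and same: "isl l = isl l'"
      by (cases w) auto
    then have l'w'': "nontrivial_letter k l'" "w'' \<in> F k" "w'' \<noteq> [] \<longrightarrow> isl l' \<noteq> isl (hd w'')"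
      using w by (auto simp: Fj_Cons)
    define m where "m = letter_mult k l l'"
    have m: "is_letter k m" "isl m = isl l"
      using letter_mult_is_letter[OF k l is_letter_if_nontrivial[OF l'w''(1)] same] by (simp_all add: m_def)
    have fm: "\<phi> k \<alpha> \<beta> (l # w) = \<phi>\<^sub>l k \<alpha> \<beta> m \<circ> \<phi> k \<alpha> \<beta> w''"
      using fj_letter_mult[OF k l is_letter_if_nontrivial[OF l'w''(1)] same adm]
      by (simp add: ww m_def o_assoc)
    show ?thesis
    proof (cases "nontrivial_letter k m")
      case False
      then show ?thesis
        using that[of w''] l'w'' fm fj_letter_trivial[OF k m(1)] by (simp add: ww)
    next
      case True
      then show ?thesis
        using that[of "m # w''"] l'w'' fm m same by (simp add: ww Fj_Cons)
    qed
  qed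
qed

lemma reduced_word_exists:
  assumes k: "k \<ge> 1" and adm: "admissible \<alpha> \<beta>"
  shows "\<forall>l\<in>set r. is_letter k l \<Longrightarrow>
    \<exists>w\<in>F k. \<phi> k \<alpha> \<beta> w = \<phi> k \<alpha> \<beta> r \<and> lenB w \<le> lenB r \<and> lenA w \<le> lenA r"
proof (induction r)
  case Nil
  show ?case
    by (intro bexI[of _ "[]"]) (simp_all add: Fj_Nil)
next
  case (Cons l r)
  then obtain w where w: "w \<in> F k" "\<phi> k \<alpha> \<beta> w = \<phi> k \<alpha> \<beta> r" "lenB w \<le> lenB r" "lenA w \<le> lenA r"
    by auto
  obtain w' where w': "w' \<in> F k" "\<phi> k \<alpha> \<beta> w' = \<phi> k \<alpha> \<beta> (l # w)"
    "lenB w' \<le> lenB (l # w)" "lenA w' \<le> lenA (l # w)"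
    using reduced_word_Cons[OF k adm _ w(1)] Cons.prems by auto
  show ?case
    using w w' by (intro bexI[of _ w']) auto
qed

lemma glenB_le:
  assumes "w \<in> F k" and "\<phi> k \<alpha> \<beta> w = \<gamma>"
  shows "glenB XS Q G aQ aG ob k \<alpha> \<beta> \<gamma> \<le> lenB w"
  unfolding glenB_def by (rule Least_le) (use assms in blast)

lemma glenA_le:
  assumes "w \<in> F k" and "\<phi> k \<alpha> \<beta> w = \<gamma>" and "lenB w = glenB XS Q G aQ aG ob k \<alpha> \<beta> \<gamma>"
  shows "glenA XS Q G aQ aG ob k \<alpha> \<beta> \<gamma> \<le> lenA w"
  unfolding glenA_def by (rule Least_le) (use assms in blast)

lemma lenB_le_1_if_lenA_0:
  assumes "w \<in> F k" and "lenA w = 0"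
  shows "lenB w \<le> 1"
proof (cases w rule: remdups_adj.cases)
  case (3 l l' w')
  then have "\<not> isl l" "\<not> isl l'"
    using assms(2) by (auto split: if_splits)
  moreover have "isl l \<noteq> isl l'"
    using assms(1) 3 by (simp add: Fj_iff_successively)
  ultimately show ?thesis
    by simp
qed auto

lemma glenB_fj_le:
  assumes k: "k \<ge> 1" and adm: "admissible \<alpha> \<beta>" and r: "\<forall>l\<in>set r. is_letter k l"
  shows "glenB XS Q G aQ aG ob k \<alpha> \<beta> (\<phi> k \<alpha> \<beta> r) \<le> lenB r"
proof -
  obtain w where "w \<in> F k" "\<phi> k \<alpha> \<beta> w = \<phi> k \<alpha> \<beta> r" "lenB w \<le> lenB r"
    using reduced_word_exists[OF k adm r] by blast
  then show ?thesis
    using glenB_le by fastforce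
qed

lemma not_lex_gt_glen_if_lenA_0:
  assumes k: "k \<ge> 1" and adm: "admissible \<alpha> \<beta>" and r: "\<forall>l\<in>set r. is_letter k l"
    and "lenA r = 0"
  shows "\<not> lex_gt (glenB XS Q G aQ aG ob k \<alpha> \<beta> (\<phi> k \<alpha> \<beta> r),
                   glenA XS Q G aQ aG ob k \<alpha> \<beta> (\<phi> k \<alpha> \<beta> r)) (1, 0)"
proof -
  let ?\<gamma> = "\<phi> k \<alpha> \<beta> r"
  obtain w where w: "w \<in> F k" "\<phi> k \<alpha> \<beta> w = ?\<gamma>" "lenA w = 0"
    using reduced_word_exists[OF k adm r] \<open>lenA r = 0\<close> by fastforce
  have "glenB XS Q G aQ aG ob k \<alpha> \<beta> ?\<gamma> \<le> lenB w" "lenB w \<le> 1"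
    using glenB_le[OF w(1,2)] lenB_le_1_if_lenA_0[OF w(1,3)] by simp_all
  moreover have "glenA XS Q G aQ aG ob k \<alpha> \<beta> ?\<gamma> = 0"
    if "glenB XS Q G aQ aG ob k \<alpha> \<beta> ?\<gamma> = 1"
    using glenA_le[OF w(1,2)] that calculation w(3) by simp
  ultimately show ?thesis
    by (auto simp: lex_gt_def)
qed

section \<open>Counting letters in sections\<close>

lemma lenB_letter_section:
  "admissible \<alpha> \<beta> \<Longrightarrow> k \<ge> 1 \<Longrightarrow>
    lenB (letter_section k \<alpha> \<beta> l y) = (if \<not> isl l \<and> y = ob k then 1 else 0)"
  by (auto simp: letter_section_def admissible_def split: sum.split prod.split)

lemma lenA_letter_section:
  "admissible \<alpha> \<beta> \<Longrightarrow> k \<ge> 1 \<Longrightarrow>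
    lenA (letter_section k \<alpha> \<beta> l y) = (if \<not> isl l \<and> (y = \<alpha> k \<or> y = \<beta> k) then 1 else 0)"
  by (auto simp: letter_section_def admissible_def split: sum.split prod.split)

lemma lenB_word_section:
  assumes "admissible \<alpha> \<beta>" and "k \<ge> 1"
  shows "lenB (word_section k \<alpha> \<beta> w y) =
    card {i \<in> B_positions w. root_perm (drop (Suc i) w) y = ob k}"
proof -
  have "lenB (word_section k \<alpha> \<beta> w y) =
    length (filter (\<lambda>i. \<not> isl (w ! i) \<and> root_perm (drop (Suc i) w) y = ob k) [0..<length w])"
    by (induction w)
      (simp_all add: lenB_letter_section[OF assms] upt_conv_Cons map_Suc_upt[symmetric] filter_map
        o_def del: upt_Suc)
  then show ?thesis
    by (simp add: length_filter_conv_card B_positions_def conj_assoc cong: conj_cong)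
qed

lemma lenA_word_section_pos:
  assumes "admissible \<alpha> \<beta>" and "k \<ge> 1" and "lenA (word_section k \<alpha> \<beta> w y) \<noteq> 0"
  shows "\<exists>i\<in>B_positions w. root_perm (drop (Suc i) w) y \<in> {\<alpha> k, \<beta> k}"
  using assms(3)
proof (induction w)
  case (Cons l w)
  show ?case
  proof (cases "lenA (letter_section k \<alpha> \<beta> l (root_perm w y)) = 0")
    case True
    then obtain i where "i \<in> B_positions w" "root_perm (drop (Suc i) w) y \<in> {\<alpha> k, \<beta> k}"
      using Cons by auto
    then show ?thesis
      by (intro bexI[of _ "Suc i"]) (auto simp: B_positions_def)
  next
    case False
    then show ?thesis
      using lenA_letter_section[OF assms(1,2)]
      by (intro bexI[of _ 0]) (auto simp: B_positions_def split: if_splits)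
  qed
qed simp

lemma lenB_power_section:
  "lenB (power_section k \<alpha> \<beta> w n x) = (\<Sum>m<n. lenB (word_section k \<alpha> \<beta> w ((root_perm w ^^ m) x)))"
  by (induction n) simp_all

lemma lenA_power_section_pos:
  "lenA (power_section k \<alpha> \<beta> w n x) \<noteq> 0 \<Longrightarrow>
    \<exists>m<n. lenA (word_section k \<alpha> \<beta> w ((root_perm w ^^ m) x)) \<noteq> 0"
  by (induction n) (auto simp: less_Suc_eq)

definition root_elem :: "nat \<Rightarrow> ('x, 'q, 'g) word \<Rightarrow> 'x \<Rightarrow> 'x" where
  "root_elem k w = foldr (\<lambda>l p. case l of Inl a \<Rightarrow> a \<otimes>\<^bsub>BG k\<^esub> p | Inr _ \<Rightarrow> p) w \<one>\<^bsub>BG k\<^esub>"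

lemma root_elem_in_Agrp: "k \<ge> 1 \<Longrightarrow> \<forall>l\<in>set w. is_letter k l \<Longrightarrow> root_elem k w \<in> AG k"
proof (induction w)
  case Nil
  then show ?case
    using subgroup.one_closed[OF subgroup_Agrp] by (simp add: root_elem_def)
next
  case (Cons l w)
  then show ?case
    using subgroup.m_closed[OF subgroup_Agrp]
    by (auto simp: root_elem_def is_letter_def split: sum.split)
qed

lemma root_perm_eq_root_elem:
  assumes k: "k \<ge> 1" and w: "\<forall>l\<in>set w. is_letter k l" and y: "y \<in> XS k"
  shows "root_perm w y = root_elem k w y"
  using w
proof (induction w)
  case Nil
  then show ?case
    using y by (simp add: root_elem_def BijGroup_one_apply)
next
  case (Cons l w)
  have "root_elem k w \<in> Bij (XS k)"
    using Cons.prems k root_elem_in_Agrp Agrp_Bij by simp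
  then show ?case
    using Cons k y Agrp_Bij
    by (auto simp: root_elem_def letter_root_def is_letter_def BijGroup_mult_apply split: sum.split)
qed

lemma bij_betw_root_perm:
  assumes "k \<ge> 1" and "\<forall>l\<in>set w. is_letter k l"
  shows "bij_betw (root_perm w) (XS k) (XS k)"
proof -
  have "bij_betw (root_elem k w) (XS k) (XS k)"
    using Agrp_Bij[OF assms(1) root_elem_in_Agrp[OF assms]] by (simp add: Bij_def)
  moreover have "bij_betw (root_perm w) (XS k) (XS k) = bij_betw (root_elem k w) (XS k) (XS k)"
    by (rule bij_betw_cong) (rule root_perm_eq_root_elem[OF assms])
  ultimately show ?thesis
    by simp
qed

lemma funpow_root_perm_eq_root_elem:
  assumes k: "k \<ge> 1" and w: "\<forall>l\<in>set w. is_letter k l" and y: "y \<in> XS k"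
  shows "(root_perm w ^^ n) y = (root_elem k w ^^ n) y"
proof (induction n)
  case (Suc n)
  have "(root_perm w ^^ Suc n) y = root_elem k w ((root_perm w ^^ n) y)"
    using root_perm_eq_root_elem[OF k w funpow_root_perm_in_level[OF k w y]] by simp
  then show ?case
    using Suc by simp
qed simp

lemma root_perm_surj:
  assumes "k \<ge> 1" and "\<forall>l\<in>set w. is_letter k l" and "y \<in> XS k"
  obtains x where "x \<in> XS k" and "root_perm w x = y"
proof -
  have "y \<in> root_perm w ` XS k"
    using bij_betw_imp_surj_on[OF bij_betw_root_perm[OF assms(1,2)]] assms(3) by simp
  then show ?thesis
    using that by (auto simp: image_iff)
qed

definition root_order :: "nat \<Rightarrow> ('x, 'q, 'g) word \<Rightarrow> nat" where
  "root_order k w = group.ord (BG k) (root_elem k w)"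

lemma root_order:
  assumes k: "k \<ge> 1" and w: "\<forall>l\<in>set w. is_letter k l"
  shows "0 < root_order k w" and "root_order k w \<le> mj XS Q G aQ aG k"
    and "\<And>y. y \<in> XS k \<Longrightarrow> (root_perm w ^^ root_order k w) y = y"
proof -
  interpret BG: group "BG k" by (rule group_BijGroup)
  have elem: "root_elem k w \<in> AG k" "root_elem k w \<in> Bij (XS k)"
    using root_elem_in_Agrp[OF k w] Agrp_Bij[OF k] by simp_all
  then have "root_elem k w \<in> carrier (BG k)"
    by (simp add: BijGroup_def)
  then have "1 \<le> BG.ord (root_elem k w)"
    by (rule BG.ord_ge_1[OF finite_BijGroup[OF finite_level[OF k]]])
  then show "0 < root_order k w"
    by (simp add: root_order_def)
  have "finite (AG k)"
    using finite_BijGroup[OF finite_level[OF k]] subgroup.subset[OF subgroup_Agrp[OF k]]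
    by (rule finite_subset[rotated])
  then show "root_order k w \<le> mj XS Q G aQ aG k"
    unfolding root_order_def mj_def using elem(1) by (intro Max_ge) auto
  fix y assume y: "y \<in> XS k"
  have "(root_perm w ^^ root_order k w) y = (root_elem k w ^^ root_order k w) y"
    by (rule funpow_root_perm_eq_root_elem[OF k w y])
  also have "(root_elem k w ^^ root_order k w) y = (root_elem k w [^]\<^bsub>BG k\<^esub> root_order k w) y"
    using BijGroup_pow_apply[OF elem(2) y] by simp
  also have "\<dots> = y"
    using \<open>root_elem k w \<in> carrier (BG k)\<close> y by (simp add: root_order_def BijGroup_one_apply)
  finally show "(root_perm w ^^ root_order k w) y = y" .
qed

lemma root_period:
  assumes k: "k \<ge> 1" and w: "\<forall>l\<in>set w. is_letter k l" and x: "x \<in> XS k"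
  shows "0 < root_period w x" and "(root_perm w ^^ root_period w x) x = x"
    and "inj_on (\<lambda>n. (root_perm w ^^ n) x) {..<root_period w x}"
proof -
  have "0 < root_period w x \<and> (root_perm w ^^ root_period w x) x = x"
    unfolding root_period_def by (rule LeastI[of _ "root_order k w"]) (use root_order[OF k w] x in simp)
  then show "0 < root_period w x" "(root_perm w ^^ root_period w x) x = x"
    by simp_all
  show "inj_on (\<lambda>n. (root_perm w ^^ n) x) {..<root_period w x}"
    by (rule inj_on_funpow_least_period[OF \<open>(root_perm w ^^ root_period w x) x = x\<close>])
      (auto simp: root_period_def dest: not_less_Least)
qed

lemma lenB_power_section_eq_card:
  assumes k: "k \<ge> 1" and w: "\<forall>l\<in>set w. is_letter k l" and adm: "admissible \<alpha> \<beta>"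
    and x: "x \<in> XS k" and inj: "inj_on (\<lambda>m. (root_perm w ^^ m) x) {..<L}"
  shows "lenB (power_section k \<alpha> \<beta> w L x) =
    card {i \<in> B_positions w. \<exists>m<L. root_perm (drop (Suc i) w) ((root_perm w ^^ m) x) = ob k}"
proof -
  define hits where
    "hits m = {i \<in> B_positions w. root_perm (drop (Suc i) w) ((root_perm w ^^ m) x) = ob k}" for m
  have "m = m'" if "m < L" "m' < L" "i \<in> hits m" "i \<in> hits m'" for m m' i
  proof -
    have "inj_on (root_perm (drop (Suc i) w)) (XS k)"
      using bij_betw_root_perm[OF k] w by (simp add: bij_betw_def in_set_dropD)
    then have "(root_perm w ^^ m) x = (root_perm w ^^ m') x"
      by (rule inj_onD)
        (use that(3,4) in \<open>auto simp: hits_def intro: funpow_root_perm_in_level[OF k w x]\<close>)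
    then show "m = m'"
      using inj that(1,2) by (auto dest: inj_onD)
  qed
  then have inj_snd: "inj_on snd (SIGMA m:{..<L}. hits m)"
    by (auto intro!: inj_onI)
  have "lenB (power_section k \<alpha> \<beta> w L x) = (\<Sum>m<L. card (hits m))"
    by (simp add: lenB_power_section lenB_word_section[OF adm k] hits_def)
  also have "\<dots> = card (SIGMA m:{..<L}. hits m)"
    by (rule card_SigmaI[symmetric]) (auto simp: hits_def)
  also have "\<dots> = card (snd ` (SIGMA m:{..<L}. hits m))"
    by (rule card_image[OF inj_snd, symmetric])
  also have "snd ` (SIGMA m:{..<L}. hits m) =
      {i \<in> B_positions w. \<exists>m<L. root_perm (drop (Suc i) w) ((root_perm w ^^ m) x) = ob k}"
    by (auto simp: hits_def image_iff)
  finally show ?thesis .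
qed

lemma admissible_if_mem_Y:
  assumes "\<forall>n\<ge>1. \<alpha> n \<in> Y n" and "\<forall>n\<ge>1. \<beta> n \<in> Y' n"
    and Y: "\<And>n. n \<ge> 1 \<Longrightarrow> Y n \<subseteq> XS n - {ob n} \<and> Y' n \<subseteq> XS n - {ob n}"
    and Y_disj: "\<And>n. n \<ge> 1 \<Longrightarrow> Y n \<inter> Y' n = {}"
  shows "admissible \<alpha> \<beta>"
  unfolding admissible_def
proof (intro allI impI)
  fix n :: nat
  assume n: "n \<ge> 1"
  then have "\<alpha> n \<in> Y n" "\<beta> n \<in> Y' n"
    using assms(1,2) by simp_all
  then show "\<alpha> n \<noteq> \<beta> n \<and> \<alpha> n \<noteq> ob n \<and> \<beta> n \<noteq> ob n"
    using Y[OF n] Y_disj[OF n] by auto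
qed

lemma Zset_memE:
  assumes j: "j \<ge> 1" and w: "\<forall>l\<in>set w. is_letter j l" and "lenB w \<ge> 1"
    and Y: "\<And>n. n \<ge> 1 \<Longrightarrow> Y n \<subseteq> XS n - {ob n} \<and> Y' n \<subseteq> XS n - {ob n}"
    and Y_disj: "\<And>n. n \<ge> 1 \<Longrightarrow> Y n \<inter> Y' n = {}"
    and st: "(s, t) \<in> Zset XS Q G aQ aG ob Y Y' j w"
  obtains x \<alpha> \<beta> where "x \<in> XS j" "admissible \<alpha> \<beta>" "\<alpha> j = s" "\<beta> j = t"
    and "lenB w \<le> lenB (power_section j \<alpha> \<beta> w (root_period w x) x)"
    and "lenA (power_section j \<alpha> \<beta> w (root_period w x) x) \<noteq> 0"
proof -
  from st obtain x \<alpha> \<beta> where x: "x \<in> XS j" and \<alpha>: "\<forall>i\<ge>1. \<alpha> i \<in> Y i" and \<beta>: "\<forall>i\<ge>1. \<beta> i \<in> Y' i"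
    and st_eq: "\<alpha> j = s" "\<beta> j = t"
    and cond: "let \<gamma> = stabsec XS j (\<phi> j \<alpha> \<beta> w) [x] in
      if lenB w > 1 then glenB XS Q G aQ aG ob (Suc j) \<alpha> \<beta> \<gamma> = lenB w
      else lex_gt (glenB XS Q G aQ aG ob (Suc j) \<alpha> \<beta> \<gamma>, glenA XS Q G aQ aG ob (Suc j) \<alpha> \<beta> \<gamma>) (1, 0)"
    unfolding Zset_def by blast
  have adm: "admissible \<alpha> \<beta>"
    using \<alpha> \<beta> Y Y_disj by (rule admissible_if_mem_Y)
  define r where "r = power_section j \<alpha> \<beta> w (root_period w x) x"
  have r: "\<forall>l\<in>set r. is_letter (Suc j) l"
    unfolding r_def by (rule power_section_letters[OF j w])
  let ?gB = "glenB XS Q G aQ aG ob (Suc j) \<alpha> \<beta> (\<phi> (Suc j) \<alpha> \<beta> r)"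
  let ?gA = "glenA XS Q G aQ aG ob (Suc j) \<alpha> \<beta> (\<phi> (Suc j) \<alpha> \<beta> r)"
  have "stabsec XS j (\<phi> j \<alpha> \<beta> w) [x] = \<phi> (Suc j) \<alpha> \<beta> r"
    unfolding r_def by (rule stabsec_fj[OF j w adm x])
  then have cond': "if lenB w > 1 then ?gB = lenB w else lex_gt (?gB, ?gA) (1, 0)"
    using cond by (simp only: Let_def)
  have "lenB w \<le> ?gB"
    using cond' \<open>lenB w \<ge> 1\<close> by (auto simp: lex_gt_def split: if_splits)
  then have "lenB w \<le> lenB r"
    using glenB_fj_le[OF _ adm r] by simp
  moreover have "lenA r \<noteq> 0"
  proof
    assume "lenA r = 0"
    then have "\<not> lex_gt (?gB, ?gA) (1, 0)"
      using not_lex_gt_glen_if_lenA_0[OF _ adm r] by simp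
    then show False
      using cond' by (auto simp: lex_gt_def split: if_splits)
  qed
  ultimately show ?thesis
    unfolding r_def by (rule that[OF x adm st_eq])
qed

definition root_hits :: "nat \<Rightarrow> ('x, 'q, 'g) word \<Rightarrow> 'x \<Rightarrow> 'x set" where
  "root_hits k w y = (\<lambda>(i, n). root_perm (drop (Suc i) w) ((root_perm w ^^ n) y)) `
     (B_positions w \<times> {..<root_order k w})"

lemma card_root_hits:
  assumes "k \<ge> 1" and "\<forall>l\<in>set w. is_letter k l"
  shows "card (root_hits k w y) \<le> lenB w * mj XS Q G aQ aG k"
proof -
  have "card (root_hits k w y) \<le> card (B_positions w \<times> {..<root_order k w})"
    unfolding root_hits_def by (rule card_image_le) simp
  also have "\<dots> = lenB w * root_order k w"
    by (simp add: card_cartesian_product card_B_positions)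
  also have "\<dots> \<le> lenB w * mj XS Q G aQ aG k"
    using root_order(2)[OF assms] by simp
  finally show ?thesis .
qed

lemma Zset_meets_root_hits:
  assumes j: "j \<ge> 1" and w: "\<forall>l\<in>set w. is_letter j l" and "lenB w \<ge> 1"
    and Y: "\<And>n. n \<ge> 1 \<Longrightarrow> Y n \<subseteq> XS n - {ob n} \<and> Y' n \<subseteq> XS n - {ob n}"
    and Y_disj: "\<And>n. n \<ge> 1 \<Longrightarrow> Y n \<inter> Y' n = {}"
    and i0: "i0 \<in> B_positions w"
    and y0: "y0 \<in> XS j" "root_perm (drop (Suc i0) w) y0 = ob j"
    and st: "(s, t) \<in> Zset XS Q G aQ aG ob Y Y' j w"
  shows "s \<in> root_hits j w y0 \<or> t \<in> root_hits j w y0"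
proof -
  obtain x \<alpha> \<beta> where x: "x \<in> XS j" and adm: "admissible \<alpha> \<beta>" and st_eq: "\<alpha> j = s" "\<beta> j = t"
    and B: "lenB w \<le> lenB (power_section j \<alpha> \<beta> w (root_period w x) x)"
    and A: "lenA (power_section j \<alpha> \<beta> w (root_period w x) x) \<noteq> 0"
    using Zset_memE[OF j w \<open>lenB w \<ge> 1\<close> Y Y_disj st] by blast
  let ?\<pi> = "root_perm w" and ?\<sigma> = "\<lambda>i. root_perm (drop (Suc i) w)" and ?L = "root_period w x"
  have \<sigma>_inj: "inj_on (?\<sigma> i) (XS j)" for i
    using bij_betw_root_perm[OF j] w by (simp add: bij_betw_def in_set_dropD)
  \<comment> \<open>every B-position of w, in particular i0, produces a B-letter along the orbit of x\<close>
  have "{i \<in> B_positions w. \<exists>m<?L. ?\<sigma> i ((?\<pi> ^^ m) x) = ob j} = B_positions w"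
    using lenB_power_section_eq_card[OF j w adm x root_period(3)[OF j w x]] B
    by (intro card_seteq) (auto simp: card_B_positions)
  then have "i0 \<in> {i \<in> B_positions w. \<exists>m<?L. ?\<sigma> i ((?\<pi> ^^ m) x) = ob j}"
    using i0 by simp
  then obtain k where "?\<sigma> i0 ((?\<pi> ^^ k) x) = ?\<sigma> i0 y0"
    using y0(2) by auto
  then have k: "(?\<pi> ^^ k) x = y0"
    using \<sigma>_inj funpow_root_perm_in_level[OF j w x] y0(1) by (auto dest: inj_onD)
  obtain m where "lenA (word_section j \<alpha> \<beta> w ((?\<pi> ^^ m) x)) \<noteq> 0"
    using lenA_power_section_pos[OF A] by blast
  then obtain i where i: "i \<in> B_positions w" "?\<sigma> i ((?\<pi> ^^ m) x) \<in> {\<alpha> j, \<beta> j}"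
    using lenA_word_section_pos[OF adm j] by blast
  \<comment> \<open>so x and y0 lie in the same orbit, whose points are (\<pi> ^^ n) y0 with n < ord \<pi>\<close>
  have "(?\<pi> ^^ m) x \<in> (\<lambda>n. (?\<pi> ^^ n) y0) ` {..<root_order j w}"
    using funpow_in_period_orbit[OF root_order(1)[OF j w] root_order(3)[OF j w x]] k by blast
  then have "?\<sigma> i ((?\<pi> ^^ m) x) \<in> root_hits j w y0"
    unfolding root_hits_def using i(1) by force
  then show ?thesis
    using i(2) st_eq by auto
qed

lemma card_Zset_le:
  assumes j: "j \<ge> 1" and w: "\<forall>l\<in>set w. is_letter j l" and "lenB w \<ge> 1"
    and Y: "\<And>n. n \<ge> 1 \<Longrightarrow> Y n \<subseteq> XS n - {ob n} \<and> Y' n \<subseteq> XS n - {ob n}"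
    and Y_disj: "\<And>n. n \<ge> 1 \<Longrightarrow> Y n \<inter> Y' n = {}"
  shows "card (Zset XS Q G aQ aG ob Y Y' j w) \<le> lenB w * mj XS Q G aQ aG j * (card (Y j) + card (Y' j))"
proof -
  have "B_positions w \<noteq> {}"
    using \<open>lenB w \<ge> 1\<close> card_B_positions[of w] by auto
  then obtain i0 where i0: "i0 \<in> B_positions w"
    by blast
  have "\<forall>l\<in>set (drop (Suc i0) w). is_letter j l"
    using w by (simp add: in_set_dropD)
  then obtain y0 where y0: "y0 \<in> XS j" "root_perm (drop (Suc i0) w) y0 = ob j"
    by (rule root_perm_surj[OF j _ ob_in_level[OF j]])
  let ?H = "root_hits j w y0"
  have finY: "finite (Y j)" "finite (Y' j)"
    using Y[OF j] finite_level[OF j] by (auto intro: finite_subset)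
  have "Zset XS Q G aQ aG ob Y Y' j w \<subseteq> (?H \<inter> Y j) \<times> Y' j \<union> Y j \<times> (?H \<inter> Y' j)"
  proof (rule subrelI)
    fix s t
    assume st: "(s, t) \<in> Zset XS Q G aQ aG ob Y Y' j w"
    then have "s \<in> Y j" "t \<in> Y' j"
      unfolding Zset_def by blast+
    then show "(s, t) \<in> (?H \<inter> Y j) \<times> Y' j \<union> Y j \<times> (?H \<inter> Y' j)"
      using Zset_meets_root_hits[OF j w \<open>lenB w \<ge> 1\<close> Y Y_disj i0 y0 st] by blast
  qed
  then have "card (Zset XS Q G aQ aG ob Y Y' j w) \<le> card ((?H \<inter> Y j) \<times> Y' j \<union> Y j \<times> (?H \<inter> Y' j))"
    using finY by (intro card_mono) auto
  also have "\<dots> \<le> card (?H \<inter> Y j) * card (Y' j) + card (Y j) * card (?H \<inter> Y' j)"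
    using card_Un_le[of "(?H \<inter> Y j) \<times> Y' j" "Y j \<times> (?H \<inter> Y' j)"]
    by (simp add: card_cartesian_product)
  also have "\<dots> \<le> card ?H * card (Y' j) + card (Y j) * card ?H"
    using finY by (intro add_mono mult_le_mono card_mono) (auto simp: root_hits_def)
  also have "\<dots> = card ?H * (card (Y j) + card (Y' j))"
    by (simp add: algebra_simps)
  also have "\<dots> \<le> lenB w * mj XS Q G aQ aG j * (card (Y j) + card (Y' j))"
    using card_root_hits[OF j w, of y0] by (rule mult_right_mono) simp
  finally show ?thesis .
qed

end

theorem lemma2p6:
  fixes Q :: "('q, 'a) monoid_scheme" and G :: "('g, 'b) monoid_scheme"
    and XS :: "nat \<Rightarrow> 'x set"
    and aQ :: "nat \<Rightarrow> 'q \<Rightarrow> 'x \<Rightarrow> 'x" and aG :: "nat \<Rightarrow> 'g \<Rightarrow> 'x \<Rightarrow> 'x"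
    and ob :: "nat \<Rightarrow> 'x" and Y Y' :: "nat \<Rightarrow> 'x set"
    and j :: nat and w :: "(('x \<Rightarrow> 'x) + ('q \<times> 'g)) list"
  assumes grpQ: "group Q" and grpG: "group G"
    and fin: "\<And>n. n \<ge> 1 \<Longrightarrow> finite (XS n) \<and> card (XS n) \<ge> 2"
    and actQ: "\<And>n. n \<ge> 1 \<Longrightarrow> group_action Q (XS n) (aQ n)"
    and actG: "\<And>n. n \<ge> 1 \<Longrightarrow> group_action G (XS n) (aG n)"
    and A1: "fin_gen Q" "fin_gen G"
    and A2: "derived Q (carrier Q) = carrier Q"
    and A3_trans: "\<And>n x y. n \<ge> 1 \<Longrightarrow> x \<in> XS n \<Longrightarrow> y \<in> XS n \<Longrightarrow>
                     \<exists>a \<in> Agrp XS Q G aQ aG n. a x = y"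
    and A3_gen: "\<And>n. n \<ge> 1 \<Longrightarrow> Agrp XS Q G aQ aG n =
                   generate (BijGroup (XS n))
                     {aG n g \<otimes>\<^bsub>BijGroup (XS n)\<^esub> aQ n q \<otimes>\<^bsub>BijGroup (XS n)\<^esub> inv\<^bsub>BijGroup (XS n)\<^esub> (aG n g)
                       | g q. g \<in> carrier G \<and> q \<in> carrier Q}"
    and o_in: "\<And>n. n \<ge> 1 \<Longrightarrow> ob n \<in> XS n"
    and Y_sub: "\<And>n. n \<ge> 1 \<Longrightarrow> Y n \<subseteq> XS n - {ob n} \<and> Y' n \<subseteq> XS n - {ob n}"
    and Y_ne: "\<And>n. n \<ge> 1 \<Longrightarrow> Y n \<noteq> {} \<and> Y' n \<noteq> {}"
    and Y_disj: "\<And>n. n \<ge> 1 \<Longrightarrow> Y n \<inter> Y' n = {}"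
    and j: "j \<ge> 1"
    and w: "w \<in> Fj XS Q G aQ aG j"
    and len: "lex_gt (lenB w, lenA w) (1, 0)"
  shows "card (Zset XS Q G aQ aG ob Y Y' j w) \<le> lenB w * mj XS Q G aQ aG j * (card (Y j) + card (Y' j))"
proof -
  interpret level_actions XS Q G aQ aG ob
    by (rule level_actions.intro) (use fin actQ actG o_in in auto)
  have "\<forall>l\<in>set w. nontrivial_letter j l"
    using w by (simp add: Fj_iff_successively)
  then have "\<forall>l\<in>set w. is_letter j l"
    by (simp add: is_letter_if_nontrivial)
  moreover have "lenB w \<ge> 1"
    using len by (auto simp: lex_gt_def)
  ultimately show ?thesis
    by (rule card_Zset_le[OF j _ _ Y_sub Y_disj])
qed

end
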